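(* Let $C_0\subset\mathbb{R}^n$ be a nonempty polyhedral set, $F:\mathbb{R}^n\to\mathbb{R}^m$ continuously differentiable, $\bar u\in C_0$, and assume $\nabla F$ is semidifferentiable at $\bar u$ for a unit direction $w\in T_{C_0}(\bar u)$. If for $z\in\mathbb{R}^m$ \[ \big[\,\nabla F(\bar u)z\in N_{C_0}(\bar u)\ \text{ and }\ (\nabla F)'(\bar u;w)z\in\mathrm{rge}\,\nabla F(\bar u)+N_{C_0}(\bar u)\,\big]\Longrightarrow z=0, \] then $F+\varDelta_{C_0}$ is metrically 2-regular around $(\bar u,F(\bar u))$ relative to $w$.
   Context: $\varDelta_{C_0}(x):=\{0\}$ if $x\in C_0$ and $\emptyset$ otherwise. $\nabla F(u)$ is the $n\times m$ transpose of the Jacobian; $\mathrm{rge}\,\nabla F(\bar u)$ its range; $(\nabla F)'(\bar u;w):=\lim_{\tau\searrow0,w'\to w}(\nabla F(\bar u+\tau w')-\nabla F(\bar u))/\tau$ (semidifferentiable if it exists). $T_Z(x):=\limsup_{\tau\searrow0}(Z-x)/\tau$ is the tangent cone; $N_{C_0}$ is the normal cone (for convex $C_0$, the normal cone of convex analysis). $\mathbb{B}$ closed unit ball, $\mathrm{cone}(Z):=\bigcup_{\gamma\ge0}\gamma Z$. Graphical derivative $DS(\bar u|\bar y)(w):=\{v\mid(w,v)\in T_{\mathrm{gph}\,S}(\bar u,\bar y)\}$. $S$ is metrically regular around $(u,y)\in\mathrm{gph}\,S$ with constant $c>0$ if there is $\varepsilon>0$ with $\mathrm{dist}[u',S^{-1}(y')]\le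 c\,\mathrm{dist}[y',S(u')]$ for all $(u',y')\in(u,y)+\varepsilon\mathbb{B}$. $K_{\varepsilon,\delta}(\bar u;w):=\bar u+(\varepsilon\mathbb{B}\cap\mathrm{cone}(w+\delta\mathbb{B}))$. $S$ is metrically 2-regular around $(\bar u,\bar y)$ relative to $w\ne0$ if for some $c>0$ there are $\varepsilon_0,\delta_0,\rho_0>0$ with $\rho_0>\|w\|^{-1}\sup\{\|\eta\|\mid\eta\in DS(\bar u|\bar y)(w)\}$ such that $S$ is metrically regular around $(u,y)$ with constant $c/\|u-\bar u\|$ for all $u\in K_{\varepsilon_0,\delta_0}(\bar u;w)\setminus\{\bar u\}$ and $y\in S(u)\cap(\bar y+\rho_0\|u-\bar u\|\mathbb{B})$. *)

theory Defs
  imports "HOL-Analysis.Analysis"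
begin

definition delta_map :: "'a set \<Rightarrow> 'a \<Rightarrow> 'b::zero set" where
  "delta_map C x = (if x \<in> C then {0} else {})"

definition plus_delta :: "('a \<Rightarrow> 'b::monoid_add) \<Rightarrow> 'a set \<Rightarrow> 'a \<Rightarrow> 'b set" where
  "plus_delta F C u = {F u + d | d. d \<in> delta_map C u}"

definition gph :: "('a \<Rightarrow> 'b set) \<Rightarrow> ('a \<times> 'b) set" where
  "gph S = {(u, y). y \<in> S u}"

definition inv_map :: "('a \<Rightarrow> 'b set) \<Rightarrow> 'b \<Rightarrow> 'a set" where
  "inv_map S y = {u. y \<in> S u}"

text \<open>Tangent cone T_Z(x) = limsup_{tau -> 0+} (Z - x)/tau (outer limit, sequential form).\<close>
definition tangent_cone :: "'a::real_normed_vector set \<Rightarrow> 'a \<Rightarrow> 'a set" where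
  "tangent_cone Z x = {v. \<exists>t vs. (\<forall>k. t k > 0) \<and> t \<longlonglongrightarrow> 0 \<and> vs \<longlonglongrightarrow> v
                                  \<and> (\<forall>k. x + t k *\<^sub>R vs k \<in> Z)}"

definition normal_cone :: "'a::real_inner set \<Rightarrow> 'a \<Rightarrow> 'a set" where
  "normal_cone C x = (if x \<in> C then {v. \<forall>y\<in>C. inner v (y - x) \<le> 0} else {})"

definition graph_deriv ::
  "('a::real_normed_vector \<Rightarrow> 'b::real_normed_vector set) \<Rightarrow> 'a \<Rightarrow> 'b \<Rightarrow> 'a \<Rightarrow> 'b set" where
  "graph_deriv S u y w = {v. (w, v) \<in> tangent_cone (gph S) (u, y)}"

definition edist_set :: "'a::metric_space \<Rightarrow> 'a set \<Rightarrow> ereal" where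
  "edist_set x A = (if A = {} then \<infinity> else ereal (infdist x A))"

definition metrically_regular_around ::
  "('a::metric_space \<Rightarrow> 'b::metric_space set) \<Rightarrow> 'a \<Rightarrow> 'b \<Rightarrow> real \<Rightarrow> bool" where
  "metrically_regular_around S u y c \<longleftrightarrow>
     (\<exists>\<epsilon>>0. \<forall>u' y'. dist (u', y') (u, y) \<le> \<epsilon> \<longrightarrow>
         edist_set u' (inv_map S y') \<le> ereal c * edist_set y' (S u'))"

definition Kset :: "real \<Rightarrow> real \<Rightarrow> 'a::real_normed_vector \<Rightarrow> 'a \<Rightarrow> 'a set" where
  "Kset \<epsilon> \<delta> u w = {u + v | v. norm v \<le> \<epsilon> \<and>
                        (\<exists>\<gamma>\<ge>0. \<exists>z. norm (z - w) \<le> \<delta> \<and> v = \<gamma> *\<^sub>R z)}"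

definition metrically_2_regular ::
  "('a::real_normed_vector \<Rightarrow> 'b::real_normed_vector set) \<Rightarrow> 'a \<Rightarrow> 'b \<Rightarrow> 'a \<Rightarrow> bool" where
  "metrically_2_regular S ub yb w \<longleftrightarrow> w \<noteq> 0 \<and>
     (\<exists>c>0. \<exists>\<epsilon>0>0. \<exists>\<delta>0>0. \<exists>\<rho>0>0.
        ereal \<rho>0 > (SUP \<eta>\<in>graph_deriv S ub yb w. ereal (norm \<eta> / norm w)) \<and>
        (\<forall>u\<in>Kset \<epsilon>0 \<delta>0 ub w - {ub}. \<forall>y\<in>S u \<inter> cball yb (\<rho>0 * norm (u - ub)).
            metrically_regular_around S u y (c / norm (u - ub))))"

end

theory Submission
  imports Defs
begin

(* Write C0 as a finite system a_i . x <= b_i. Near a point u of C0 the set coincides with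
   u + T(u), where T(u) is the polar cone of the active normals a_i, so a Newton
   (Lyusternik-Graves) iteration shows that F + Delta_C0 is metrically regular at u with
   constant 4/kappa as soon as the Jacobian at u maps the unit ball of T(u) onto a kappa-ball.
   By separation and conic duality this holds when |transpose (J u) y - g| >= kappa for all
   unit y and all g in the cone of active normals at u.
   On K(ub;w) the bound holds with kappa = |u - ub| / c. Otherwise there are points
   u_k = ub + t_k z_k with t_k -> 0, z_k -> w and unit y_k -> z; in the limit
   transpose (J ub) z lies in N_C0(ub), and after division by t_k also
   D z lies in rge transpose (J ub) + N_C0(ub), so z = 0 by hypothesis, a contradiction.
   The bound on the graphical derivative comes from local Lipschitz continuity of F. *)

lemma polyhedron_as_inequalities:
  fixes C :: "'a::euclidean_space set"
  assumes "polyhedron C"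
  obtains I :: "'a set set" and a b where "finite I" "C = {x. \<forall>i\<in>I. a i \<bullet> x \<le> b i}"
proof -
  obtain H where H: "finite H" "C = \<Inter>H" "\<forall>h\<in>H. \<exists>a b. a \<noteq> 0 \<and> h = {x. a \<bullet> x \<le> b}"
    using assms unfolding polyhedron_def by blast
  then obtain a b where "\<forall>h\<in>H. h = {x. a h \<bullet> x \<le> b h}"
    by metis
  then have "C = {x. \<forall>h\<in>H. a h \<bullet> x \<le> b h}"
    using H(2) by auto
  with H(1) show ?thesis using that by blast
qed

definition active_constraints ::
  "'i set \<Rightarrow> ('i \<Rightarrow> 'a::real_inner) \<Rightarrow> ('i \<Rightarrow> real) \<Rightarrow> 'a \<Rightarrow> 'i set" where
  "active_constraints I a b u = {i\<in>I. a i \<bullet> u = b i}"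

definition polar_cone :: "'a::real_inner set \<Rightarrow> 'a set" where
  "polar_cone S = {v. \<forall>s\<in>S. s \<bullet> v \<le> 0}"

lemma zero_in_polar_cone: "0 \<in> polar_cone S"
  by (simp add: polar_cone_def)

lemma polar_cone_scaleR: "c \<ge> 0 \<Longrightarrow> v \<in> polar_cone S \<Longrightarrow> c *\<^sub>R v \<in> polar_cone S"
  by (simp add: polar_cone_def mult_nonneg_nonpos)

lemma closed_polar_cone: "closed (polar_cone S)"
  unfolding polar_cone_def by (simp add: Collect_ball_eq closed_INT closed_halfspace_le)

lemma convex_polar_cone: "convex (polar_cone S)"
  unfolding polar_cone_def by (simp add: Collect_ball_eq convex_INT convex_halfspace_le)

lemma inequality_system_local_structure:
  fixes C :: "'a::euclidean_space set"
  assumes fin: "finite I" and C: "C = {x. \<forall>i\<in>I. a i \<bullet> x \<le> b i}" and "u \<in> C"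
  obtains \<rho> where "\<rho> > 0"
    and "\<And>x. x \<in> C \<Longrightarrow> dist x u < \<rho> \<Longrightarrow> active_constraints I a b x \<subseteq> active_constraints I a b u"
    and "\<And>x v. x \<in> C \<Longrightarrow> dist x u < \<rho> \<Longrightarrow> v \<in> polar_cone (a ` active_constraints I a b u) \<Longrightarrow>
           norm v < \<rho> \<Longrightarrow> x + v \<in> C"
proof -
  let ?Act = "active_constraints I a b u"
  define Op where "Op = (\<Inter>i\<in>I - ?Act. {y. a i \<bullet> y < b i})"
  have "open Op"
    unfolding Op_def using fin by (intro open_INT) (auto intro: open_halfspace_lt)
  moreover have "u \<in> Op"
    using \<open>u \<in> C\<close> C unfolding Op_def active_constraints_def by force
  ultimately obtain e where e: "e > 0" "ball u e \<subseteq> Op"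
    by (meson open_contains_ball)
  have inactive: "a i \<bullet> y < b i" if "dist y u < e" "i \<in> I - ?Act" for y i
    using e(2) that unfolding Op_def by (auto simp: dist_commute)
  show ?thesis
  proof (rule that)
    show "e / 2 > 0" using e by simp
    show "active_constraints I a b x \<subseteq> ?Act" if "x \<in> C" "dist x u < e / 2" for x
      using inactive[of x] that e(1) unfolding active_constraints_def by force
    show "x + v \<in> C" if x: "x \<in> C" "dist x u < e / 2" and v: "v \<in> polar_cone (a ` ?Act)"
      and "norm v < e / 2" for x v
    proof -
      have "dist (x + v) u < e"
        using x(2) \<open>norm v < e / 2\<close> norm_triangle_ineq[of "x - u" v]
        by (simp add: dist_norm algebra_simps)
      moreover have "a i \<bullet> (x + v) \<le> b i" if "i \<in> ?Act" "i \<in> I" for i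
        using that v x(1) C by (fastforce simp: polar_cone_def inner_add_right intro: add_increasing2)
      ultimately show ?thesis
        unfolding C using inactive by (force simp: less_imp_le)
    qed
  qed
qed

lemma convex_cone_hull_active_normals_subset_normal_cone:
  fixes C :: "'a::euclidean_space set"
  assumes C: "C = {x. \<forall>i\<in>I. a i \<bullet> x \<le> b i}" and u: "u \<in> C"
  shows "convex_cone hull (a ` active_constraints I a b u) \<subseteq> normal_cone C u"
proof (rule hull_minimal)
  show "a ` active_constraints I a b u \<subseteq> normal_cone C u"
    using u C by (auto simp: active_constraints_def normal_cone_def inner_diff_right)
  show "convex_cone (normal_cone C u)"
    using u unfolding convex_cone_iff normal_cone_def
    by (auto simp: inner_add_left mult_nonneg_nonpos add_nonpos_nonpos)
qed

lemma conic_duality_dist_le: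
  fixes S :: "'a::euclidean_space set"
  assumes fin: "finite S" and s: "s \<ge> 0"
    and bnd: "\<And>v. v \<in> polar_cone S \<Longrightarrow> norm v \<le> 1 \<Longrightarrow> p \<bullet> v \<le> s"
  obtains g where "g \<in> convex_cone hull S" "norm (p - g) \<le> s"
proof (rule ccontr)
  assume far: "\<not> thesis"
  define G where "G = convex_cone hull S"
  define W where "W = (\<Union>g\<in>G. \<Union>e\<in>cball (0::'a) s. {g + e})"
  have "closed G"
    unfolding G_def using fin by (rule closed_convex_cone_hull)
  then have "closed W"
    unfolding W_def by (intro closed_compact_sums) auto
  have "convex W"
    unfolding W_def G_def by (intro convex_sums) (auto simp: convex_convex_cone_hull)
  have "p \<notin> W"
    using far that unfolding W_def G_def by (force simp: dist_norm)
  then obtain z \<beta> where z: "z \<bullet> p < \<beta>" "\<forall>x\<in>W. \<beta> < z \<bullet> x"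
    using separating_hyperplane_closed_point[OF \<open>convex W\<close> \<open>closed W\<close>] by blast
  define v where "v = - z"
  have W: "v \<bullet> (g + e) < - \<beta>" if "g \<in> G" "norm e \<le> s" for g e
    using z(2) that unfolding W_def v_def by fastforce
  have "0 \<in> G"
    unfolding G_def by (rule convex_cone_hull_contains_0)
  have \<beta>: "0 < - \<beta>"
    using W[OF \<open>0 \<in> G\<close>, of 0] s by simp
  have vp: "v \<bullet> p > - \<beta>"
    using z(1) unfolding v_def by simp
  have "v \<in> polar_cone S"
    unfolding polar_cone_def
  proof (rule CollectI, rule ballI, rule ccontr)
    fix a assume a: "a \<in> S" "\<not> a \<bullet> v \<le> 0"
    then have pos: "v \<bullet> a > 0"
      by (simp add: inner_commute)
    define t where "t = - \<beta> / (v \<bullet> a)"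
    have "t \<ge> 0"
      unfolding t_def using \<beta> pos by (simp add: divide_nonpos_pos)
    then have "t *\<^sub>R a \<in> G"
      unfolding G_def using a(1) by (simp add: convex_cone_hull_mul hull_inc)
    then have "v \<bullet> (t *\<^sub>R a) < - \<beta>"
      using W[of "t *\<^sub>R a" 0] s by simp
    then show False
      unfolding t_def using pos by simp
  qed
  have "v \<noteq> 0"
    using vp \<beta> by auto
  then have nv: "norm v > 0"
    by simp
  define v1 where "v1 = (1 / norm v) *\<^sub>R v"
  have "v1 \<in> polar_cone S" "norm v1 = 1"
    unfolding v1_def using \<open>v \<in> polar_cone S\<close> nv by (simp_all add: polar_cone_scaleR)
  then have "p \<bullet> v1 \<le> s"
    using bnd by simp
  have "v \<bullet> (0 + s *\<^sub>R v1) < - \<beta>"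
    using W[OF \<open>0 \<in> G\<close>, of "s *\<^sub>R v1"] \<open>norm v1 = 1\<close> s by simp
  then have "s * norm v < v \<bullet> p"
    unfolding v1_def using nv vp by (simp add: power2_norm_eq_inner[symmetric] power2_eq_square)
  then have "s < p \<bullet> v1"
    unfolding v1_def using nv by (simp add: inner_commute field_simps)
  with \<open>p \<bullet> v1 \<le> s\<close> show False
    by simp
qed

text \<open>Proved by separating r from the compact convex image of the polar cone ball and
  applying conic duality to the separating functional.\<close>

lemma matrix_maps_polar_cone_ball_onto_ball:
  fixes M :: "real^'n^'m" and S :: "(real^'n) set"
  assumes fin: "finite S"
    and far: "\<And>y g. norm y = 1 \<Longrightarrow> g \<in> convex_cone hull S \<Longrightarrow> \<kappa> \<le> norm (transpose M *v y - g)"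
    and r: "norm r < \<kappa>"
  shows "\<exists>v\<in>polar_cone S. norm v \<le> 1 \<and> M *v v = r"
proof (rule ccontr)
  assume r_not_hit: "\<not> ?thesis"
  define K where "K = polar_cone S \<inter> cball 0 1"
  define Q where "Q = (\<lambda>v. M *v v) ` K"
  have "compact K"
    unfolding K_def by (intro closed_Int_compact closed_polar_cone) auto
  then have "compact Q"
    unfolding Q_def by (intro compact_continuous_image) (auto intro: continuous_intros)
  have "convex Q"
    unfolding Q_def K_def
    by (intro convex_linear_image convex_Int convex_polar_cone) (auto simp: matrix_vector_mul_linear)
  have "r \<notin> Q"
    using r_not_hit unfolding Q_def K_def by auto
  then obtain z \<beta> where z: "z \<bullet> r < \<beta>" "\<forall>x\<in>Q. \<beta> < z \<bullet> x"
    using separating_hyperplane_closed_point[OF \<open>convex Q\<close> compact_imp_closed[OF \<open>compact Q\<close>]]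
    by blast
  have "0 \<in> K"
    unfolding K_def by (simp add: zero_in_polar_cone)
  then have "\<beta> < 0"
    using z(2) unfolding Q_def by force
  then have "z \<noteq> 0"
    using z(1) by auto
  define y where "y = - (1 / norm z) *\<^sub>R z"
  have y: "norm y = 1"
    unfolding y_def using \<open>z \<noteq> 0\<close> by simp
  have "(transpose M *v y) \<bullet> v \<le> norm r" if "v \<in> polar_cone S" "norm v \<le> 1" for v
  proof -
    have "M *v v \<in> Q"
      unfolding Q_def K_def using that by simp
    then have "z \<bullet> r < z \<bullet> (M *v v)"
      using z by force
    then have "y \<bullet> (M *v v) < y \<bullet> r"
      unfolding y_def using \<open>z \<noteq> 0\<close> by (simp add: divide_strict_right_mono)
    also have "\<dots> \<le> norm r"
      using norm_cauchy_schwarz[of y r] y by simp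
    finally show ?thesis
      by (simp add: dot_lmul_matrix)
  qed
  then obtain g where "g \<in> convex_cone hull S" "norm (transpose M *v y - g) \<le> norm r"
    using conic_duality_dist_le[OF fin norm_ge_zero] by blast
  with far[OF y] r show False
    by fastforce
qed

lemma plus_delta_eq: "plus_delta F C x = (if x \<in> C then {F x} else {})"
  unfolding plus_delta_def delta_map_def by auto

lemma inv_map_plus_delta: "inv_map (plus_delta F C) y = {x\<in>C. F x = y}"
  unfolding inv_map_def plus_delta_eq by auto

lemma metrically_regular_around_plus_delta_if_solvable:
  fixes F :: "'a::metric_space \<Rightarrow> 'b::{metric_space,monoid_add}"
  assumes "c > 0" "\<epsilon> > 0"
    and solve: "\<And>u' y'. u' \<in> C \<Longrightarrow> dist u' u \<le> \<epsilon> \<Longrightarrow> dist y' (F u) \<le> \<epsilon> \<Longrightarrow>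
                  \<exists>x\<in>C. F x = y' \<and> dist u' x \<le> c * dist y' (F u')"
  shows "metrically_regular_around (plus_delta F C) u (F u) c"
  unfolding metrically_regular_around_def
proof (intro exI[of _ \<epsilon>] conjI allI impI)
  show "\<epsilon> > 0" by fact
  fix u' y' assume near: "dist (u', y') (u, F u) \<le> \<epsilon>"
  show "edist_set u' (inv_map (plus_delta F C) y') \<le> ereal c * edist_set y' (plus_delta F C u')"
  proof (cases "u' \<in> C")
    case False
    then show ?thesis
      using \<open>c > 0\<close> by (simp add: edist_set_def plus_delta_eq)
  next
    case True
    have "dist u' u \<le> \<epsilon>" "dist y' (F u) \<le> \<epsilon>"
      using near dist_fst_le[of "(u', y')" "(u, F u)"] dist_snd_le[of "(u', y')" "(u, F u)"]
      by simp_all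
    then obtain x where x: "x \<in> C" "F x = y'" "dist u' x \<le> c * dist y' (F u')"
      using solve[OF True] by blast
    then have mem: "x \<in> inv_map (plus_delta F C) y'"
      by (simp add: inv_map_plus_delta)
    have "infdist u' (inv_map (plus_delta F C) y') \<le> dist u' x"
      using mem by (rule infdist_le)
    also have "\<dots> \<le> c * dist y' (F u')"
      by (rule x(3))
    finally have "infdist u' (inv_map (plus_delta F C) y') \<le> c * dist y' (F u')" .
    moreover have "edist_set u' (inv_map (plus_delta F C) y') =
        ereal (infdist u' (inv_map (plus_delta F C) y'))"
      using mem by (auto simp: edist_set_def)
    moreover have "edist_set y' (plus_delta F C u') = ereal (dist y' (F u'))"
      using True by (simp add: edist_set_def plus_delta_eq)
    ultimately show ?thesis
      by simp
  qed
qed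

lemma convergent_if_steps_le_geometric:
  fixes x :: "nat \<Rightarrow> 'a::banach"
  assumes steps: "\<And>k. norm (x (Suc k) - x k) \<le> c * q ^ k" and "0 \<le> q" "q < 1"
  shows "convergent x"
proof -
  have "summable (\<lambda>k. c * q ^ k)"
    using assms(2,3) by (intro summable_mult summable_geometric) simp
  then have "summable (\<lambda>k. norm (x (Suc k) - x k))"
    by (rule summable_comparison_test'[where N = 0]) (simp add: steps)
  then have "convergent (\<lambda>k. \<Sum>j<k. x (Suc j) - x j)"
    by (simp add: summable_norm_cancel flip: summable_iff_convergent)
  then have "convergent (\<lambda>k. x 0 + (\<Sum>j<k. x (Suc j) - x j))"
    by (intro convergent_add convergent_const)
  then show ?thesis
    by (simp add: sum_lessThan_telescope)
qed

lemma newton_step: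
  fixes F A :: "'a::real_normed_vector \<Rightarrow> 'b::real_normed_vector"
  assumes L: "L > 0"
    and lin: "\<And>x x'. x \<in> ball u \<delta> \<Longrightarrow> x' \<in> ball u \<delta> \<Longrightarrow>
                norm (F x' - F x - A (x' - x)) \<le> norm (x' - x) / (2 * L)"
    and loc: "\<And>x v. x \<in> C \<Longrightarrow> x \<in> ball u \<delta> \<Longrightarrow> v \<in> T \<Longrightarrow> norm v < \<delta> \<Longrightarrow> x + v \<in> C"
    and x: "x \<in> C" "x \<in> ball u \<delta>" "x + d \<in> ball u \<delta>"
    and d: "d \<in> T" "norm d < \<delta>" "A d = y - F x" "norm d \<le> L * norm (F x - y)"
  shows "x + d \<in> C" "norm (F (x + d) - y) \<le> norm (F x - y) / 2"
proof -
  show "x + d \<in> C"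
    using loc x(1,2) d(1,2) .
  have "norm (F (x + d) - y) = norm (F (x + d) - F x - A (x + d - x))"
    using d(3) by (simp add: algebra_simps)
  also have "\<dots> \<le> norm d / (2 * L)"
    using lin[OF x(2,3)] by simp
  also have "\<dots> \<le> norm (F x - y) / 2"
    using d(4) L by (simp add: field_simps)
  finally show "norm (F (x + d) - y) \<le> norm (F x - y) / 2" .
qed

text \<open>The iteration x_(k+1) = x_k + R (y - F x_k), with R a bounded right inverse of A taking
  values in T. The residual halves at every step, and the iterates stay in the ball where
  the linearization estimate holds because 2 L |F u' - y| is at most half its radius.\<close>

lemma newton_iterates:
  fixes F A :: "'a::real_normed_vector \<Rightarrow> 'b::real_normed_vector"
  assumes L: "L > 0" and "\<delta> > 0"
    and right_inv: "\<And>r. \<exists>d\<in>T. norm d \<le> L * norm r \<and> A d = r"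
    and lin: "\<And>x x'. x \<in> ball u \<delta> \<Longrightarrow> x' \<in> ball u \<delta> \<Longrightarrow>
                norm (F x' - F x - A (x' - x)) \<le> norm (x' - x) / (2 * L)"
    and loc: "\<And>x v. x \<in> C \<Longrightarrow> x \<in> ball u \<delta> \<Longrightarrow> v \<in> T \<Longrightarrow> norm v < \<delta> \<Longrightarrow> x + v \<in> C"
    and start: "u' \<in> C" "dist u u' \<le> \<delta> / 4" "4 * L * norm (F u' - y) \<le> \<delta>"
  obtains x where "\<And>k. x k \<in> C"
    "\<And>k. norm (x k - u') \<le> 2 * L * norm (F u' - y) * (1 - (1/2) ^ k)"
    "\<And>k. norm (F (x k) - y) \<le> (1/2) ^ k * norm (F u' - y)"
    "\<And>k. norm (x (Suc k) - x k) \<le> L * norm (F u' - y) * (1/2) ^ k"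
proof -
  obtain R where R: "\<And>r. R r \<in> T" "\<And>r. norm (R r) \<le> L * norm r" "\<And>r. A (R r) = r"
    using right_inv by metis
  define e0 where "e0 = norm (F u' - y)"
  define x where "x k = ((\<lambda>z. z + R (y - F z)) ^^ k) u'" for k
  have x_Suc: "x (Suc k) = x k + R (y - F (x k))" for k
    by (simp add: x_def)
  have step: "norm (R (y - F (x k))) \<le> L * e0 * (1/2) ^ k"
    if "norm (F (x k) - y) \<le> (1/2) ^ k * e0" for k
  proof -
    have "norm (R (y - F (x k))) \<le> L * norm (F (x k) - y)"
      using R(2)[of "y - F (x k)"] by (simp add: norm_minus_commute)
    also have "\<dots> \<le> L * ((1/2) ^ k * e0)"
      using that L by simp
    finally show ?thesis
      by (simp add: mult_ac)
  qed
  have near: "z \<in> ball u \<delta>" if "norm (z - u') \<le> 2 * L * e0 * (1 - (1/2) ^ k)" for z k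
  proof -
    have "dist u z \<le> dist u u' + norm (z - u')"
      using dist_triangle[of u z u'] by (simp add: dist_norm norm_minus_commute)
    moreover have "2 * L * e0 * (1 - (1/2) ^ k) \<le> 2 * L * e0"
      using L by (intro mult_left_le) (auto simp: e0_def)
    ultimately show ?thesis
      using that start(2,3) \<open>\<delta> > 0\<close> by (simp add: e0_def)
  qed
  have inv: "x k \<in> C \<and> norm (x k - u') \<le> 2 * L * e0 * (1 - (1/2) ^ k)
              \<and> norm (F (x k) - y) \<le> (1/2) ^ k * e0" for k
  proof (induction k)
    case 0
    show ?case
      using start(1) by (simp add: x_def e0_def)
  next
    case (Suc k)
    define d where "d = R (y - F (x k))"
    have nd: "norm d \<le> L * e0 * (1/2) ^ k"
      using step Suc.IH by (simp add: d_def)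
    also have "\<dots> \<le> L * e0"
      using L by (simp add: e0_def mult_left_le power_le_one)
    finally have "norm d < \<delta>"
      using start(3) \<open>\<delta> > 0\<close> by (simp add: e0_def)
    have "norm (x k + d - u') \<le> norm (x k - u') + norm d"
      using norm_triangle_ineq[of "x k - u'" d] by (simp add: algebra_simps)
    also have "\<dots> \<le> 2 * L * e0 * (1 - (1/2) ^ Suc k)"
      using Suc.IH nd by (simp add: field_simps)
    finally have dist_Suc: "norm (x k + d - u') \<le> 2 * L * e0 * (1 - (1/2) ^ Suc k)" .
    have "x k \<in> ball u \<delta>"
      using near Suc.IH by blast
    moreover have "A d = y - F (x k)" "norm d \<le> L * norm (F (x k) - y)"
      using R(2,3) by (simp_all add: d_def norm_minus_commute)
    ultimately have "x k + d \<in> C" "norm (F (x k + d) - y) \<le> norm (F (x k) - y) / 2"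
      using newton_step[OF L lin loc] Suc.IH near[OF dist_Suc] R(1) \<open>norm d < \<delta>\<close>
      by (simp_all add: d_def)
    with Suc.IH dist_Suc show ?case
      by (simp add: x_Suc flip: d_def)
  qed
  show thesis
    using inv step x_Suc by (intro that) (auto simp: e0_def)
qed

lemma newton_solution:
  fixes F A :: "'a::banach \<Rightarrow> 'b::real_normed_vector"
  assumes "closed C" "continuous_on C F"
    and L: "L > 0" and "\<delta> > 0"
    and right_inv: "\<And>r. \<exists>d\<in>T. norm d \<le> L * norm r \<and> A d = r"
    and lin: "\<And>x x'. x \<in> ball u \<delta> \<Longrightarrow> x' \<in> ball u \<delta> \<Longrightarrow>
                norm (F x' - F x - A (x' - x)) \<le> norm (x' - x) / (2 * L)"
    and loc: "\<And>x v. x \<in> C \<Longrightarrow> x \<in> ball u \<delta> \<Longrightarrow> v \<in> T \<Longrightarrow> norm v < \<delta> \<Longrightarrow> x + v \<in> C"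
    and start: "u' \<in> C" "dist u u' \<le> \<delta> / 4" "4 * L * norm (F u' - y) \<le> \<delta>"
  shows "\<exists>x\<in>C. F x = y \<and> dist u' x \<le> 2 * L * norm (F u' - y)"
proof -
  obtain x where x: "\<And>k. x k \<in> C"
    "\<And>k. norm (x k - u') \<le> 2 * L * norm (F u' - y) * (1 - (1/2) ^ k)"
    "\<And>k. norm (F (x k) - y) \<le> (1/2) ^ k * norm (F u' - y)"
    "\<And>k. norm (x (Suc k) - x k) \<le> L * norm (F u' - y) * (1/2) ^ k"
    using newton_iterates[OF L \<open>\<delta> > 0\<close> right_inv lin loc start] by blast
  have "convergent x"
    using x(4) by (rule convergent_if_steps_le_geometric) auto
  then obtain l where l: "x \<longlonglongrightarrow> l"
    by (auto simp: convergent_def)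
  have "l \<in> C"
    using \<open>closed C\<close> l x(1) by (meson closed_sequentially)
  have dist_le: "norm (x k - u') \<le> 2 * L * norm (F u' - y)" for k
  proof -
    have "2 * L * norm (F u' - y) * (1 - (1/2) ^ k) \<le> 2 * L * norm (F u' - y)"
      using L by (intro mult_left_le) auto
    then show ?thesis
      using x(2)[of k] by linarith
  qed
  have "(\<lambda>k. norm (x k - u')) \<longlonglongrightarrow> norm (l - u')"
    using l by (intro tendsto_intros)
  then have "norm (l - u') \<le> 2 * L * norm (F u' - y)"
    by (rule tendsto_upperbound) (simp_all add: dist_le)
  have "(\<lambda>k. (1/2::real) ^ k) \<longlonglongrightarrow> 0"
    by (rule LIMSEQ_power_zero) simp
  then have residual: "(\<lambda>k. (1/2::real) ^ k * norm (F u' - y)) \<longlonglongrightarrow> 0"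
    by (rule tendsto_mult_left_zero)
  have ev: "\<forall>k. norm (F (x k) - y) \<le> (1/2) ^ k * norm (F u' - y)"
    using x(3) by blast
  have "(\<lambda>k. F (x k) - y) \<longlonglongrightarrow> 0"
    by (rule Lim_null_comparison[OF always_eventually[OF ev] residual])
  then have "(\<lambda>k. F (x k)) \<longlonglongrightarrow> y"
    by (simp add: LIM_zero_iff)
  moreover have "(\<lambda>k. F (x k)) \<longlonglongrightarrow> F l"
    using \<open>continuous_on C F\<close> l \<open>l \<in> C\<close> by (rule continuous_on_tendsto_compose) (simp add: x(1))
  ultimately have "F l = y"
    using LIMSEQ_unique by blast
  moreover have "dist u' l = norm (l - u')"
    by (metis dist_commute dist_norm)
  ultimately show ?thesis
    using \<open>l \<in> C\<close> \<open>norm (l - u') \<le> _\<close> by auto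
qed

lemma onorm_matrix_vector_mult_le:
  fixes A :: "real^'n^'m"
  shows "onorm ((*v) A) \<le> real CARD('m) * real CARD('n) * norm A"
proof (rule onorm_le_matrix_component)
  fix i j
  have "norm (A $ i $ j) \<le> norm (A $ i)"
    by (rule Finite_Cartesian_Product.norm_nth_le)
  also have "\<dots> \<le> norm A"
    by (rule Finite_Cartesian_Product.norm_nth_le)
  finally show "\<bar>A $ i $ j\<bar> \<le> norm A"
    by simp
qed

lemma continuous_jacobian_strict_linearization:
  fixes F :: "real^'n \<Rightarrow> real^'m" and J :: "real^'n \<Rightarrow> real^'n^'m"
  assumes deriv: "\<And>x. (F has_derivative (\<lambda>h. J x *v h)) (at x)"
    and "isCont J u" and "e > 0"
  obtains \<delta> where "\<delta> > 0"
    "\<And>x x'. x \<in> ball u \<delta> \<Longrightarrow> x' \<in> ball u \<delta> \<Longrightarrow>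
       norm (F x' - F x - J u *v (x' - x)) \<le> e * norm (x' - x)"
proof -
  define K where "K = real CARD('m) * real CARD('n)"
  have "K > 0"
    by (simp add: K_def)
  then obtain \<delta> where "\<delta> > 0" and \<delta>: "\<And>x. dist x u < \<delta> \<Longrightarrow> dist (J x) (J u) < e / K"
    using \<open>isCont J u\<close> \<open>e > 0\<close> unfolding continuous_at_eps_delta by (metis divide_pos_pos)
  have "norm (F x' - F x - J u *v (x' - x)) \<le> e * norm (x' - x)"
    if "x \<in> ball u \<delta>" "x' \<in> ball u \<delta>" for x x'
  proof -
    have "norm (F x' - F x - (\<lambda>h. J u *v h) (x' - x)) \<le> norm (x' - x) * e"
    proof (rule differentiable_bound_linearization[where S = "ball u \<delta>"])
      show "x + t *\<^sub>R (x' - x) \<in> ball u \<delta>" if "t \<in> {0..1}" for t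
        using that \<open>x \<in> ball u \<delta>\<close> \<open>x' \<in> ball u \<delta>\<close> convexD[OF convex_ball, of x u \<delta> x' "1 - t" t]
        by (simp add: algebra_simps)
      show "(F has_derivative (\<lambda>h. J z *v h)) (at z within ball u \<delta>)" for z
        using deriv by (rule has_derivative_at_withinI)
      show "u \<in> ball u \<delta>"
        using \<open>\<delta> > 0\<close> by simp
      show "onorm ((\<lambda>h. J z *v h) - (\<lambda>h. J u *v h)) \<le> e" if "z \<in> ball u \<delta>" for z
      proof -
        have "(\<lambda>h. J z *v h) - (\<lambda>h. J u *v h) = (*v) (J z - J u)"
          by (auto simp: fun_diff_def matrix_vector_mult_diff_rdistrib)
        moreover have "dist z u < \<delta>"
          using that by (simp add: dist_commute)
        then have "norm (J z - J u) < e / K"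
          using \<delta> by (simp add: dist_norm)
        ultimately show ?thesis
          using onorm_matrix_vector_mult_le[of "J z - J u"] \<open>K > 0\<close>
          by (simp add: K_def field_simps)
      qed
    qed
    then show ?thesis
      by (simp add: mult.commute)
  qed
  with \<open>\<delta> > 0\<close> show thesis
    using that by blast
qed

lemma linear_right_inverse_on_cone:
  assumes "linear A" "\<kappa> > 0" "0 \<in> T" and cone: "\<And>c v. c \<ge> 0 \<Longrightarrow> v \<in> T \<Longrightarrow> c *\<^sub>R v \<in> T"
    and onto: "\<And>r. norm r < \<kappa> \<Longrightarrow> \<exists>v\<in>T. norm v \<le> 1 \<and> A v = r"
  shows "\<exists>d\<in>T. norm d \<le> (2 / \<kappa>) * norm r \<and> A d = r"
proof (cases "r = 0")
  case True
  then show ?thesis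
    using \<open>0 \<in> T\<close> linear_0[OF \<open>linear A\<close>] by auto
next
  case False
  then have "norm ((\<kappa> / (2 * norm r)) *\<^sub>R r) < \<kappa>"
    using \<open>\<kappa> > 0\<close> by simp
  then obtain v where v: "v \<in> T" "norm v \<le> 1" "A v = (\<kappa> / (2 * norm r)) *\<^sub>R r"
    using onto by blast
  show ?thesis
  proof (intro bexI conjI)
    show "(2 * norm r / \<kappa>) *\<^sub>R v \<in> T"
      using cone v(1) \<open>\<kappa> > 0\<close> by simp
    have "norm ((2 * norm r / \<kappa>) *\<^sub>R v) = (2 * norm r / \<kappa>) * norm v"
      using \<open>\<kappa> > 0\<close> by simp
    also have "\<dots> \<le> 2 * norm r / \<kappa>"
      using v(2) \<open>\<kappa> > 0\<close> by (intro mult_left_le) auto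
    finally show "norm ((2 * norm r / \<kappa>) *\<^sub>R v) \<le> (2 / \<kappa>) * norm r"
      by simp
    show "A ((2 * norm r / \<kappa>) *\<^sub>R v) = r"
      using v(3) False \<open>\<kappa> > 0\<close> by (simp add: linear_scale[OF \<open>linear A\<close>])
  qed
qed

text \<open>A quantitative Lyusternik-Graves theorem, proved by the Newton iteration above with
  the right inverse of J u on T.\<close>

lemma metrically_regular_around_plus_delta_if_open:
  fixes F :: "real^'n \<Rightarrow> real^'m" and J :: "real^'n \<Rightarrow> real^'n^'m"
  assumes "closed C"
    and deriv: "\<And>x. (F has_derivative (\<lambda>h. J x *v h)) (at x)" and "continuous_on UNIV J"
    and "\<kappa> > 0" "\<rho> > 0" "0 \<in> T" "\<And>c v. c \<ge> 0 \<Longrightarrow> v \<in> T \<Longrightarrow> c *\<^sub>R v \<in> T"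
    and loc: "\<And>x v. x \<in> C \<Longrightarrow> dist x u < \<rho> \<Longrightarrow> v \<in> T \<Longrightarrow> norm v < \<rho> \<Longrightarrow> x + v \<in> C"
    and onto: "\<And>r. norm r < \<kappa> \<Longrightarrow> \<exists>v\<in>T. norm v \<le> 1 \<and> J u *v v = r"
  shows "metrically_regular_around (plus_delta F C) u (F u) (4 / \<kappa>)"
proof -
  define L where "L = 2 / \<kappa>"
  have "L > 0"
    using \<open>\<kappa> > 0\<close> by (simp add: L_def)
  have right_inv: "\<exists>d\<in>T. norm d \<le> L * norm r \<and> J u *v d = r" for r
    unfolding L_def using matrix_vector_mul_linear assms(4,6,7) onto
    by (rule linear_right_inverse_on_cone)
  have "isCont J u"
    using \<open>continuous_on UNIV J\<close> by (simp add: continuous_on_eq_continuous_at)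
  then obtain \<delta>1 where "\<delta>1 > 0" and \<delta>1: "\<And>x x'. x \<in> ball u \<delta>1 \<Longrightarrow> x' \<in> ball u \<delta>1 \<Longrightarrow>
      norm (F x' - F x - J u *v (x' - x)) \<le> (\<kappa> / 4) * norm (x' - x)"
    using continuous_jacobian_strict_linearization[OF deriv] \<open>\<kappa> > 0\<close> by (metis zero_less_divide_iff zero_less_numeral)
  define \<delta> where "\<delta> = min \<delta>1 \<rho>"
  have "\<delta> > 0"
    using \<open>\<delta>1 > 0\<close> \<open>\<rho> > 0\<close> by (simp add: \<delta>_def)
  have lin: "norm (F x' - F x - J u *v (x' - x)) \<le> norm (x' - x) / (2 * L)"
    if "x \<in> ball u \<delta>" "x' \<in> ball u \<delta>" for x x'
    using \<delta>1[of x x'] that \<open>\<kappa> > 0\<close> by (simp add: \<delta>_def L_def field_simps)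
  have loc': "x + v \<in> C" if "x \<in> C" "x \<in> ball u \<delta>" "v \<in> T" "norm v < \<delta>" for x v
    using loc that by (simp add: \<delta>_def dist_commute)
  have "continuous_on UNIV F"
    using deriv by (meson differentiable_at_imp_differentiable_on differentiable_def
        differentiable_imp_continuous_on)
  then obtain \<delta>2 where "\<delta>2 > 0" and \<delta>2: "\<And>x. dist x u < \<delta>2 \<Longrightarrow> dist (F x) (F u) < \<delta> / (8 * L)"
    using \<open>\<delta> > 0\<close> \<open>L > 0\<close> unfolding continuous_on_eq_continuous_at[OF open_UNIV] continuous_at_eps_delta
    by (metis UNIV_I divide_pos_pos mult_pos_pos zero_less_numeral)
  show ?thesis
  proof (rule metrically_regular_around_plus_delta_if_solvable)
    show "4 / \<kappa> > 0" "min (\<delta> / 4) (min (\<delta>2 / 2) (\<delta> / (8 * L))) > 0"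
      using \<open>\<kappa> > 0\<close> \<open>\<delta> > 0\<close> \<open>\<delta>2 > 0\<close> \<open>L > 0\<close> by simp_all
    fix u' y' assume "u' \<in> C" and near: "dist u' u \<le> min (\<delta> / 4) (min (\<delta>2 / 2) (\<delta> / (8 * L)))"
      "dist y' (F u) \<le> min (\<delta> / 4) (min (\<delta>2 / 2) (\<delta> / (8 * L)))"
    have "dist (F u') (F u) < \<delta> / (8 * L)"
      using near(1) \<open>\<delta>2 > 0\<close> by (intro \<delta>2) simp
    then have "dist (F u') y' \<le> \<delta> / (4 * L)"
      using near(2) dist_triangle[of "F u'" y' "F u"] by (simp add: dist_commute)
    then have "4 * L * norm (F u' - y') \<le> \<delta>"
      using \<open>L > 0\<close> by (simp add: dist_norm field_simps)
    moreover have "dist u u' \<le> \<delta> / 4"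
      using near(1) by (simp add: dist_commute)
    ultimately have "\<exists>x\<in>C. F x = y' \<and> dist u' x \<le> 2 * L * norm (F u' - y')"
      using newton_solution[OF \<open>closed C\<close> _ \<open>L > 0\<close> \<open>\<delta> > 0\<close> right_inv lin loc' \<open>u' \<in> C\<close>]
        continuous_on_subset[OF \<open>continuous_on UNIV F\<close>] by blast
    then show "\<exists>x\<in>C. F x = y' \<and> dist u' x \<le> 4 / \<kappa> * dist y' (F u')"
      by (simp add: L_def dist_norm norm_minus_commute)
  qed
qed

lemma graph_deriv_plus_delta_norm_le:
  fixes F :: "'a::real_normed_vector \<Rightarrow> 'b::real_normed_vector"
  assumes "\<delta> > 0" and lip: "\<And>x. x \<in> ball u \<delta> \<Longrightarrow> norm (F x - F u) \<le> B * norm (x - u)"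
    and "\<eta> \<in> graph_deriv (plus_delta F C) u (F u) w"
  shows "norm \<eta> \<le> B * norm w"
proof -
  obtain t vs where t: "\<And>k. t k > 0" "t \<longlonglongrightarrow> 0" and vs: "vs \<longlonglongrightarrow> (w, \<eta>)"
    and graph: "\<And>k. (u, F u) + t k *\<^sub>R vs k \<in> gph (plus_delta F C)"
    using assms(3) unfolding graph_deriv_def tangent_cone_def by blast
  have fst: "(\<lambda>k. fst (vs k)) \<longlonglongrightarrow> w" and snd: "(\<lambda>k. snd (vs k)) \<longlonglongrightarrow> \<eta>"
    using tendsto_fst[OF vs] tendsto_snd[OF vs] by simp_all
  have F_eq: "F (u + t k *\<^sub>R fst (vs k)) = F u + t k *\<^sub>R snd (vs k)" for k
    using graph[of k] unfolding gph_def plus_delta_eq by (cases "vs k") (auto split: if_splits)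
  have "(\<lambda>k. t k * norm (fst (vs k))) \<longlonglongrightarrow> 0 * norm w"
    using t(2) fst by (intro tendsto_mult tendsto_norm)
  then have "\<forall>\<^sub>F k in sequentially. t k * norm (fst (vs k)) < \<delta>"
    using \<open>\<delta> > 0\<close> by (auto dest: order_tendstoD(2))
  then have ev: "\<forall>\<^sub>F k in sequentially. norm (snd (vs k)) - B * norm (fst (vs k)) \<le> 0"
  proof (rule eventually_mono)
    fix k assume "t k * norm (fst (vs k)) < \<delta>"
    then have "u + t k *\<^sub>R fst (vs k) \<in> ball u \<delta>"
      using t(1)[of k] by (simp add: dist_norm)
    from lip[OF this] have "t k * norm (snd (vs k)) \<le> t k * (B * norm (fst (vs k)))"
      using t(1)[of k] by (simp add: F_eq mult_ac)
    then show "norm (snd (vs k)) - B * norm (fst (vs k)) \<le> 0"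
      using t(1)[of k] by simp
  qed
  have "(\<lambda>k. norm (snd (vs k)) - B * norm (fst (vs k))) \<longlonglongrightarrow> norm \<eta> - B * norm w"
    using fst snd by (intro tendsto_intros)
  then have "norm \<eta> - B * norm w \<le> 0"
    using ev by (rule tendsto_upperbound) simp
  then show ?thesis
    by simp
qed

lemma SUP_graph_deriv_plus_delta_less:
  fixes F :: "real^'n \<Rightarrow> real^'m" and J :: "real^'n \<Rightarrow> real^'n^'m"
  assumes deriv: "\<And>x. (F has_derivative (\<lambda>h. J x *v h)) (at x)" and "isCont J u" and "w \<noteq> 0"
  obtains \<rho> where "\<rho> > 0"
    "ereal \<rho> > (SUP \<eta>\<in>graph_deriv (plus_delta F C) u (F u) w. ereal (norm \<eta> / norm w))"
proof -
  obtain \<delta> where "\<delta> > 0" and \<delta>: "\<And>x x'. x \<in> ball u \<delta> \<Longrightarrow> x' \<in> ball u \<delta> \<Longrightarrow>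
      norm (F x' - F x - J u *v (x' - x)) \<le> 1 * norm (x' - x)"
    using continuous_jacobian_strict_linearization[OF deriv \<open>isCont J u\<close> zero_less_one] by blast
  define B where "B = onorm ((*v) (J u)) + 1"
  have lip: "norm (F x - F u) \<le> B * norm (x - u)" if "x \<in> ball u \<delta>" for x
  proof -
    have "norm (F x - F u) \<le> norm (F x - F u - J u *v (x - u)) + norm (J u *v (x - u))"
      using norm_triangle_ineq[of "F x - F u - J u *v (x - u)" "J u *v (x - u)"] by simp
    also have "\<dots> \<le> norm (x - u) + onorm ((*v) (J u)) * norm (x - u)"
      using \<delta>[OF _ that] \<open>\<delta> > 0\<close> onorm[OF matrix_vector_mul_bounded_linear, of "J u" "x - u"]
      by (intro add_mono) auto
    finally show ?thesis
      by (simp add: B_def algebra_simps)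
  qed
  have "B \<ge> 0"
    unfolding B_def using onorm_pos_le[OF matrix_vector_mul_bounded_linear[of "J u"]] by linarith
  have "(SUP \<eta>\<in>graph_deriv (plus_delta F C) u (F u) w. ereal (norm \<eta> / norm w)) \<le> ereal B"
    using graph_deriv_plus_delta_norm_le[OF \<open>\<delta> > 0\<close> lip] \<open>w \<noteq> 0\<close>
    by (intro SUP_least) (simp add: divide_le_eq)
  also have "\<dots> < ereal (B + 1)"
    by simp
  finally show thesis
    using \<open>B \<ge> 0\<close> by (intro that[of "B + 1"]) simp_all
qed

lemma metrically_regular_around_plus_delta_inequality_system:
  fixes F :: "real^'n \<Rightarrow> real^'m" and J :: "real^'n \<Rightarrow> real^'n^'m"
  assumes fin: "finite I" and C: "C = {x. \<forall>i\<in>I. a i \<bullet> x \<le> b i}"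
    and deriv: "\<And>x. (F has_derivative (\<lambda>h. J x *v h)) (at x)" and contJ: "continuous_on UNIV J"
    and "u \<in> C" "\<kappa> > 0"
    and far: "\<And>y g. norm y = 1 \<Longrightarrow> g \<in> convex_cone hull (a ` active_constraints I a b u) \<Longrightarrow>
                \<kappa> \<le> norm (transpose (J u) *v y - g)"
  shows "metrically_regular_around (plus_delta F C) u (F u) (4 / \<kappa>)"
proof -
  obtain \<rho> where "\<rho> > 0"
    and "\<And>x. x \<in> C \<Longrightarrow> dist x u < \<rho> \<Longrightarrow> active_constraints I a b x \<subseteq> active_constraints I a b u"
    and loc: "\<And>x v. x \<in> C \<Longrightarrow> dist x u < \<rho> \<Longrightarrow>
      v \<in> polar_cone (a ` active_constraints I a b u) \<Longrightarrow> norm v < \<rho> \<Longrightarrow> x + v \<in> C"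
    using inequality_system_local_structure[OF fin C \<open>u \<in> C\<close>] by metis
  have "closed C"
    unfolding C by (simp add: Collect_ball_eq closed_INT closed_halfspace_le)
  have "finite (a ` active_constraints I a b u)"
    using fin by (simp add: active_constraints_def)
  note onto = matrix_maps_polar_cone_ball_onto_ball[OF this far]
  show ?thesis
    by (rule metrically_regular_around_plus_delta_if_open[OF \<open>closed C\<close> deriv contJ \<open>\<kappa> > 0\<close>
          \<open>\<rho> > 0\<close> zero_in_polar_cone polar_cone_scaleR loc onto])
qed

lemma tendsto_matrix_vector_mult:
  fixes M :: "'b \<Rightarrow> real^'n^'m"
  assumes "(M \<longlongrightarrow> A) F" "(y \<longlongrightarrow> l) F"
  shows "((\<lambda>k. M k *v y k) \<longlongrightarrow> A *v l) F"
  unfolding matrix_vector_mult_def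
  by (intro tendsto_vec_lambda tendsto_sum tendsto_mult tendsto_vec_nth assms)

lemma tendsto_transpose:
  fixes M :: "'b \<Rightarrow> real^'n^'m"
  assumes "(M \<longlongrightarrow> A) F"
  shows "((\<lambda>k. transpose (M k)) \<longlongrightarrow> transpose A) F"
  unfolding transpose_def by (intro tendsto_vec_lambda tendsto_vec_nth assms)

lemma Lim_in_closed_set_approx:
  fixes f g :: "'b \<Rightarrow> 'a::real_normed_vector"
  assumes "closed G" "\<forall>\<^sub>F k in F. g k \<in> G" "F \<noteq> bot"
    and "(f \<longlongrightarrow> p) F" "((\<lambda>k. f k - g k) \<longlongrightarrow> 0) F"
  shows "p \<in> G"
proof -
  have "((\<lambda>k. f k - (f k - g k)) \<longlongrightarrow> p - 0) F"
    using assms(4,5) by (rule tendsto_diff)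
  then show ?thesis
    using Lim_in_closed_set[OF assms(1-3)] by simp
qed

lemma convex_cone_hull_sum:
  assumes "finite A" "\<And>i. i \<in> A \<Longrightarrow> f i \<in> convex_cone hull S"
  shows "sum f A \<in> convex_cone hull S"
  using assms by (induction A rule: finite_induct)
    (auto intro: convex_cone_hull_add convex_cone_hull_contains_0)

lemma convex_cone_hull_Basis_uminus_Basis:
  "convex_cone hull (Basis \<union> uminus ` Basis) = (UNIV :: 'a::euclidean_space set)"
proof -
  have "x \<in> convex_cone hull (Basis \<union> uminus ` Basis)" for x :: 'a
  proof -
    have "(x \<bullet> b) *\<^sub>R b \<in> convex_cone hull (Basis \<union> uminus ` Basis)" if b: "b \<in> Basis" for b
    proof (cases "x \<bullet> b \<ge> 0")
      case True
      then show ?thesis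
        using b by (intro convex_cone_hull_mul hull_inc) auto
    next
      case False
      then have "(- (x \<bullet> b)) *\<^sub>R (- b) \<in> convex_cone hull (Basis \<union> uminus ` Basis)"
        using b by (intro convex_cone_hull_mul hull_inc) auto
      then show ?thesis
        by simp
    qed
    then have "(\<Sum>b\<in>Basis. (x \<bullet> b) *\<^sub>R b) \<in> convex_cone hull (Basis \<union> uminus ` Basis)"
      by (intro convex_cone_hull_sum) auto
    then show ?thesis
      by (simp add: euclidean_representation)
  qed
  then show ?thesis
    by auto
qed

lemma convex_cone_hull_Un_matrix_range:
  fixes M :: "real^'m^'n"
  shows "convex_cone hull (S \<union> (\<lambda>x. M *v x) ` (Basis \<union> uminus ` Basis)) =
           {g + r | g r. g \<in> convex_cone hull S \<and> r \<in> range (\<lambda>x. M *v x)}"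
proof -
  have "convex_cone hull ((\<lambda>x. M *v x) ` (Basis \<union> uminus ` Basis)) = range (\<lambda>x. M *v x)"
    by (simp add: convex_cone_hull_linear_image[OF matrix_vector_mul_linear]
        convex_cone_hull_Basis_uminus_Basis)
  then show ?thesis
    unfolding convex_cone_hull_Un by auto
qed

text \<open>The first conclusion is the limit of g_k itself; the second is the limit of
  g_k / t_k - transpose (J ub) (y_k / t_k), in which the difference quotients of transpose J,
  and hence D, appear.\<close>

lemma semiderivative_limit_conditions:
  fixes J :: "real^'n \<Rightarrow> real^'n^'m" and D :: "real^'m^'n" and S :: "(real^'n) set"
  assumes "finite S" "isCont J ub"
    and sd: "((\<lambda>(\<tau>, w'). (1 / \<tau>) *\<^sub>R (transpose (J (ub + \<tau> *\<^sub>R w')) - transpose (J ub)))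
              \<longlongrightarrow> D) (at_right 0 \<times>\<^sub>F nhds w)"
    and t: "\<And>k. t k > 0" "t \<longlonglongrightarrow> 0" and z: "z \<longlonglongrightarrow> w" and y: "y \<longlonglongrightarrow> l"
    and g: "\<forall>\<^sub>F k in sequentially. g k \<in> convex_cone hull S"
    and small: "(\<lambda>k. (1 / t k) *\<^sub>R (transpose (J (ub + t k *\<^sub>R z k)) *v y k - g k)) \<longlonglongrightarrow> 0"
  shows "transpose (J ub) *v l \<in> convex_cone hull S"
    and "D *v l \<in> {g + r | g r. g \<in> convex_cone hull S \<and> r \<in> range (\<lambda>x. transpose (J ub) *v x)}"
proof -
  define M where "M k = transpose (J (ub + t k *\<^sub>R z k))" for k
  define E where "E k = M k *v y k - g k" for k
  have "(\<lambda>k. ub + t k *\<^sub>R z k) \<longlonglongrightarrow> ub + 0 *\<^sub>R w"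
    using t(2) z by (intro tendsto_intros)
  then have "(\<lambda>k. J (ub + t k *\<^sub>R z k)) \<longlonglongrightarrow> J ub"
    using \<open>isCont J ub\<close> isCont_tendsto_compose by force
  then have first_order: "(\<lambda>k. M k *v y k) \<longlonglongrightarrow> transpose (J ub) *v l"
    unfolding M_def using y by (intro tendsto_matrix_vector_mult tendsto_transpose)
  have "(\<lambda>k. t k *\<^sub>R ((1 / t k) *\<^sub>R E k)) \<longlonglongrightarrow> 0 *\<^sub>R 0"
    using t(2) small by (intro tendsto_scaleR) (simp_all add: E_def M_def)
  moreover have "t k *\<^sub>R ((1 / t k) *\<^sub>R E k) = M k *v y k - g k" for k
    using t(1)[of k] by (simp add: E_def)
  ultimately have "(\<lambda>k. M k *v y k - g k) \<longlonglongrightarrow> 0"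
    by simp
  with first_order show "transpose (J ub) *v l \<in> convex_cone hull S"
    using Lim_in_closed_set_approx[OF closed_convex_cone_hull[OF \<open>finite S\<close>] g] by simp
  define H where "H = {g + r | g r. g \<in> convex_cone hull S \<and> r \<in> range (\<lambda>x. transpose (J ub) *v x)}"
  have "closed H"
    unfolding H_def convex_cone_hull_Un_matrix_range[symmetric]
    using \<open>finite S\<close> by (intro closed_convex_cone_hull) simp
  define q where "q k = (1 / t k) *\<^sub>R g k + transpose (J ub) *v ((- 1 / t k) *\<^sub>R y k)" for k
  have "\<forall>\<^sub>F k in sequentially. q k \<in> H"
    using g
  proof (rule eventually_mono)
    fix k assume "g k \<in> convex_cone hull S"
    then have "(1 / t k) *\<^sub>R g k \<in> convex_cone hull S"
      using t(1)[of k] by (intro convex_cone_hull_mul) auto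
    then show "q k \<in> H"
      unfolding H_def q_def by blast
  qed
  have "filterlim (\<lambda>k. (t k, z k)) (at_right 0 \<times>\<^sub>F nhds w) sequentially"
    using tendsto_imp_filterlim_at_right[OF t(2)] t(1) z by (intro filterlim_Pair) simp_all
  from filterlim_compose[OF sd this]
  have "(\<lambda>k. (1 / t k) *\<^sub>R (M k - transpose (J ub))) \<longlonglongrightarrow> D"
    by (simp add: M_def)
  then have "(\<lambda>k. ((1 / t k) *\<^sub>R (M k - transpose (J ub))) *v y k) \<longlonglongrightarrow> D *v l"
    using y by (rule tendsto_matrix_vector_mult)
  moreover have "((1 / t k) *\<^sub>R (M k - transpose (J ub))) *v y k - q k = (1 / t k) *\<^sub>R E k" for k
    by (simp add: q_def E_def scaleR_matrix_vector_assoc[symmetric] matrix_vector_mult_scaleR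
        linear_neg[OF matrix_vector_mul_linear] algebra_simps del: transpose_matrix_vector)
  ultimately show "D *v l \<in> H"
    using Lim_in_closed_set_approx[OF \<open>closed H\<close> \<open>\<forall>\<^sub>F k in sequentially. q k \<in> H\<close>] small
    by (simp add: E_def M_def)
qed

lemma Kset_shrinking_sequence:
  fixes ub w :: "'a::real_normed_vector"
  assumes "norm w = 1" and e: "e \<longlonglongrightarrow> 0" "\<And>k. e k \<le> 1/2"
    and U: "\<And>k. U k \<in> Kset (e k) (e k) ub w" "\<And>k. U k \<noteq> ub"
  obtains t z where "\<And>k. t k > 0" "t \<longlonglongrightarrow> 0" "z \<longlonglongrightarrow> w"
    "\<And>k. U k = ub + t k *\<^sub>R z k" "\<And>k. norm (U k - ub) \<le> 2 * t k"
proof -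
  have "\<exists>\<gamma> z. \<gamma> \<ge> 0 \<and> norm (z - w) \<le> e k \<and> U k = ub + \<gamma> *\<^sub>R z \<and> norm (\<gamma> *\<^sub>R z) \<le> e k" for k
    using U(1)[of k] unfolding Kset_def by blast
  then obtain t z where t: "\<And>k. t k \<ge> 0" and z: "\<And>k. norm (z k - w) \<le> e k"
    and U_eq: "\<And>k. U k = ub + t k *\<^sub>R z k" and tz: "\<And>k. norm (t k *\<^sub>R z k) \<le> e k"
    by metis
  have z_norm: "1/2 \<le> norm (z k)" "norm (z k) \<le> 2" for k
    using z[of k] e(2)[of k] \<open>norm w = 1\<close> norm_triangle_ineq2[of w "z k"]
      norm_triangle_ineq[of "z k - w" w] by (simp_all add: norm_minus_commute)
  have t_pos: "t k > 0" for k
    using t[of k] U(2)[of k] U_eq[of k] by (cases "t k = 0") auto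
  have "t k \<le> 2 * e k" for k
    using tz[of k] mult_left_mono[OF z_norm(1)[of k] t[of k]] t[of k] by simp
  then have "t \<longlonglongrightarrow> 0"
    using t tendsto_mult_right_zero[OF e(1), of 2]
    by (intro tendsto_sandwich[of "\<lambda>_. 0" t sequentially "\<lambda>k. 2 * e k"]) auto
  moreover have "\<forall>k. norm (z k - w) \<le> e k"
    using z by blast
  from Lim_null_comparison[OF always_eventually[OF this] e(1)]
  have "(\<lambda>k. z k - w) \<longlonglongrightarrow> 0" .
  then have "z \<longlonglongrightarrow> w"
    by (simp add: LIM_zero_iff)
  moreover have "norm (U k - ub) \<le> 2 * t k" for k
    using mult_left_mono[OF z_norm(2)[of k] t[of k]] t[of k] by (simp add: U_eq mult.commute)
  ultimately show thesis
    using that t_pos U_eq by blast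
qed

lemma eventually_in_convex_cone_hull_active_normals:
  fixes C :: "'a::euclidean_space set"
  assumes fin: "finite I" and C: "C = {x. \<forall>i\<in>I. a i \<bullet> x \<le> b i}" and "u \<in> C"
    and x: "\<And>k. x k \<in> C" "x \<longlonglongrightarrow> u"
    and g: "\<And>k. g k \<in> convex_cone hull (a ` active_constraints I a b (x k))"
  shows "\<forall>\<^sub>F k in sequentially. g k \<in> convex_cone hull (a ` active_constraints I a b u)"
proof -
  obtain \<rho> where "\<rho> > 0"
    and act: "\<And>x. x \<in> C \<Longrightarrow> dist x u < \<rho> \<Longrightarrow> active_constraints I a b x \<subseteq> active_constraints I a b u"
    and "\<And>x v. x \<in> C \<Longrightarrow> dist x u < \<rho> \<Longrightarrow>
      v \<in> polar_cone (a ` active_constraints I a b u) \<Longrightarrow> norm v < \<rho> \<Longrightarrow> x + v \<in> C"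
    using inequality_system_local_structure[OF fin C \<open>u \<in> C\<close>] by metis
  have "\<forall>\<^sub>F k in sequentially. dist (x k) u < \<rho>"
    using x(2) \<open>\<rho> > 0\<close> by (rule tendstoD)
  then show ?thesis
  proof (rule eventually_mono)
    fix k assume "dist (x k) u < \<rho>"
    then have "active_constraints I a b (x k) \<subseteq> active_constraints I a b u"
      using act x(1) by blast
    then show "g k \<in> convex_cone hull (a ` active_constraints I a b u)"
      using g[of k] by (meson hull_mono image_mono subsetD)
  qed
qed

lemma LIMSEQ_inverse_scaleR_zero:
  fixes E :: "nat \<Rightarrow> 'a::real_normed_vector"
  assumes E: "\<And>k. norm (E k) \<le> c * t k / real (Suc k)" and t: "\<And>k. t k > 0"
  shows "(\<lambda>k. (1 / t k) *\<^sub>R E k) \<longlonglongrightarrow> 0"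
proof -
  have "norm ((1 / t k) *\<^sub>R E k) \<le> c * inverse (real (Suc k))" for k
  proof -
    have "norm ((1 / t k) *\<^sub>R E k) = norm (E k) / t k"
      using t[of k] by simp
    also have "\<dots> \<le> (c * t k / real (Suc k)) / t k"
      using E[of k] t[of k] by (intro divide_right_mono) auto
    also have "\<dots> = c * inverse (real (Suc k))"
      using t[of k] by (simp add: inverse_eq_divide)
    finally show ?thesis .
  qed
  then have "\<forall>k. norm ((1 / t k) *\<^sub>R E k) \<le> c * inverse (real (Suc k))"
    by blast
  moreover have "(\<lambda>k. c * inverse (real (Suc k))) \<longlonglongrightarrow> 0"
    by (rule tendsto_mult_right_zero[OF LIMSEQ_inverse_real_of_nat])
  ultimately show ?thesis
    by (rule Lim_null_comparison[OF always_eventually])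
qed

text \<open>A failing sequence u_k \<rightarrow> ub along w, with unit vectors y_k converging to some z, would
  by semiderivative_limit_conditions violate the second-order hypothesis at z.\<close>

lemma uniform_dual_bound:
  fixes C :: "(real^'n) set" and J :: "real^'n \<Rightarrow> real^'n^'m" and D :: "real^'m^'n"
  assumes fin: "finite I" and C: "C = {x. \<forall>i\<in>I. a i \<bullet> x \<le> b i}"
    and "isCont J ub" "ub \<in> C" "norm w = 1"
    and sd: "((\<lambda>(\<tau>, w'). (1 / \<tau>) *\<^sub>R (transpose (J (ub + \<tau> *\<^sub>R w')) - transpose (J ub)))
              \<longlongrightarrow> D) (at_right 0 \<times>\<^sub>F nhds w)"
    and hyp: "\<And>z. transpose (J ub) *v z \<in> normal_cone C ub \<Longrightarrow>
             D *v z \<in> {a + b | a b. a \<in> range (\<lambda>x. transpose (J ub) *v x) \<and> b \<in> normal_cone C ub}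
             \<Longrightarrow> z = 0"
  obtains c \<epsilon> \<delta> where "c > 0" "\<epsilon> > 0" "\<delta> > 0"
    "\<And>u y g. u \<in> C \<Longrightarrow> u \<in> Kset \<epsilon> \<delta> ub w \<Longrightarrow> u \<noteq> ub \<Longrightarrow> norm y = 1 \<Longrightarrow>
       g \<in> convex_cone hull (a ` active_constraints I a b u) \<Longrightarrow>
       norm (u - ub) / c \<le> norm (transpose (J u) *v y - g)"
proof (rule ccontr)
  assume "\<not> thesis"
  note bound_holds = that
  define e where "e k = inverse (real (Suc (Suc k)))" for k
  have "\<exists>u y g. u \<in> C \<and> u \<in> Kset (e k) (e k) ub w \<and> u \<noteq> ub \<and> norm y = 1 \<and>
          g \<in> convex_cone hull (a ` active_constraints I a b u) \<and>
          norm (transpose (J u) *v y - g) < norm (u - ub) / (real k + 1)" for k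
  proof (rule ccontr)
    assume none: "\<not> ?thesis"
    have "norm (u - ub) / (real k + 1) \<le> norm (transpose (J u) *v y - g)"
      if "u \<in> C" "u \<in> Kset (e k) (e k) ub w" "u \<noteq> ub" "norm y = 1"
        "g \<in> convex_cone hull (a ` active_constraints I a b u)" for u y g
      using none that by (meson not_le)
    then show False
      using bound_holds[of "real k + 1" "e k" "e k"] \<open>\<not> thesis\<close> by (simp add: e_def)
  qed
  then obtain U Y G where U: "\<And>k. U k \<in> C" "\<And>k. U k \<in> Kset (e k) (e k) ub w" "\<And>k. U k \<noteq> ub"
    and Y: "\<And>k. Y k \<in> sphere 0 1"
    and G: "\<And>k. G k \<in> convex_cone hull (a ` active_constraints I a b (U k))"
    and close: "\<And>k. norm (transpose (J (U k)) *v Y k - G k) < norm (U k - ub) / (real k + 1)"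
    by (metis mem_sphere_0)
  have e_lim: "e \<longlonglongrightarrow> 0"
    unfolding e_def by (rule LIMSEQ_Suc[OF LIMSEQ_inverse_real_of_nat])
  have e_half: "e k \<le> 1/2" for k
    by (simp add: e_def field_simps)
  obtain t z where t: "\<And>k. t k > 0" "t \<longlonglongrightarrow> 0" and z: "z \<longlonglongrightarrow> w"
    and U_eq: "\<And>k. U k = ub + t k *\<^sub>R z k" and U_near: "\<And>k. norm (U k - ub) \<le> 2 * t k"
    using Kset_shrinking_sequence[of w e U ub, OF \<open>norm w = 1\<close> e_lim e_half U(2) U(3)] by blast
  have "norm (transpose (J (U k)) *v Y k - G k) \<le> 2 * t k / real (Suc k)" for k
    using close[of k] divide_right_mono[OF U_near[of k], of "real k + 1"] by (simp add: add.commute)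
  then have small: "(\<lambda>k. (1 / t k) *\<^sub>R (transpose (J (U k)) *v Y k - G k)) \<longlonglongrightarrow> 0"
    using t(1) by (rule LIMSEQ_inverse_scaleR_zero)
  obtain l r where "l \<in> sphere 0 1" and r: "strict_mono r" and Yr: "(Y \<circ> r) \<longlonglongrightarrow> l"
    using compact_imp_seq_compact[OF compact_sphere, of 0 1] Y unfolding seq_compact_def by metis
  have "(\<lambda>k. ub + t k *\<^sub>R z k) \<longlonglongrightarrow> ub + 0 *\<^sub>R w"
    using t(2) z by (intro tendsto_intros)
  moreover have "U = (\<lambda>k. ub + t k *\<^sub>R z k)"
    by (simp add: fun_eq_iff U_eq)
  ultimately have "U \<longlonglongrightarrow> ub"
    by simp
  then have "(U \<circ> r) \<longlonglongrightarrow> ub"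
    using r by (rule LIMSEQ_subseq_LIMSEQ)
  then have "\<forall>\<^sub>F k in sequentially. G (r k) \<in> convex_cone hull (a ` active_constraints I a b ub)"
    using eventually_in_convex_cone_hull_active_normals[OF fin C \<open>ub \<in> C\<close>, of "U \<circ> r" "G \<circ> r"] U(1) G
    by simp
  moreover have "finite (a ` active_constraints I a b ub)"
    using fin by (simp add: active_constraints_def)
  ultimately have "transpose (J ub) *v l \<in> convex_cone hull (a ` active_constraints I a b ub)"
    "D *v l \<in> {g + r | g r. g \<in> convex_cone hull (a ` active_constraints I a b ub) \<and>
                             r \<in> range (\<lambda>x. transpose (J ub) *v x)}"
    using semiderivative_limit_conditions[OF _ \<open>isCont J ub\<close> sd, of _ "t \<circ> r" "z \<circ> r" "Y \<circ> r" l "G \<circ> r"]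
      t LIMSEQ_subseq_LIMSEQ[OF t(2) r] LIMSEQ_subseq_LIMSEQ[OF z r] Yr LIMSEQ_subseq_LIMSEQ[OF small r]
    by (simp_all add: U_eq comp_def)
  then obtain g' r' where "D *v l = g' + r'" "r' \<in> range (\<lambda>x. transpose (J ub) *v x)"
    "g' \<in> convex_cone hull (a ` active_constraints I a b ub)"
    by blast
  moreover note convex_cone_hull_active_normals_subset_normal_cone[OF C \<open>ub \<in> C\<close>]
  ultimately have "l = 0"
    using \<open>transpose (J ub) *v l \<in> _\<close> by (intro hyp) (force simp: add.commute)+
  with \<open>l \<in> sphere 0 1\<close> show False
    by simp
qed

theorem corollary2:
  fixes C0 :: "(real ^ 'n) set"
    and F :: "real ^ 'n \<Rightarrow> real ^ 'm"
    and J :: "real ^ 'n \<Rightarrow> real ^ 'n ^ 'm"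
    and ub w :: "real ^ 'n"
    and D :: "real ^ 'm ^ 'n"
  assumes "polyhedron C0" and "C0 \<noteq> {}"
    and "\<And>u. (F has_derivative (\<lambda>h. J u *v h)) (at u)"
    and "continuous_on UNIV J"
    and "ub \<in> C0"
    and "norm w = 1" and "w \<in> tangent_cone C0 ub"
    and "((\<lambda>(\<tau>, w'). (1 / \<tau>) *\<^sub>R (transpose (J (ub + \<tau> *\<^sub>R w')) - transpose (J ub)))
            \<longlongrightarrow> D) (at_right 0 \<times>\<^sub>F nhds w)"
    and "\<And>z. transpose (J ub) *v z \<in> normal_cone C0 ub \<Longrightarrow>
             D *v z \<in> {a + b | a b. a \<in> range (\<lambda>x. transpose (J ub) *v x) \<and> b \<in> normal_cone C0 ub}
             \<Longrightarrow> z = 0"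
  shows "metrically_2_regular (plus_delta F C0) ub (F ub) w"
proof -
  obtain I :: "(real^'n) set set" and a b
    where fin: "finite I" and C: "C0 = {x. \<forall>i\<in>I. a i \<bullet> x \<le> b i}"
    using polyhedron_as_inequalities[OF assms(1)] by blast
  have "isCont J ub" "w \<noteq> 0"
    using assms(4,6) by (auto simp: continuous_on_eq_continuous_at)
  obtain c \<epsilon> \<delta> where "c > 0" "\<epsilon> > 0" "\<delta> > 0" and far:
    "\<And>u y g. u \<in> C0 \<Longrightarrow> u \<in> Kset \<epsilon> \<delta> ub w \<Longrightarrow> u \<noteq> ub \<Longrightarrow> norm y = 1 \<Longrightarrow>
       g \<in> convex_cone hull (a ` active_constraints I a b u) \<Longrightarrow>
       norm (u - ub) / c \<le> norm (transpose (J u) *v y - g)"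
    using uniform_dual_bound[OF fin C \<open>isCont J ub\<close> assms(5,6,8,9)] by blast
  obtain \<rho> where "\<rho> > 0"
    and "ereal \<rho> > (SUP \<eta>\<in>graph_deriv (plus_delta F C0) ub (F ub) w. ereal (norm \<eta> / norm w))"
    using SUP_graph_deriv_plus_delta_less[OF assms(3) \<open>isCont J ub\<close> \<open>w \<noteq> 0\<close>] by blast
  moreover have "metrically_regular_around (plus_delta F C0) u (F u) (4 * c / norm (u - ub))"
    if "u \<in> Kset \<epsilon> \<delta> ub w - {ub}" "u \<in> C0" for u
  proof -
    have "metrically_regular_around (plus_delta F C0) u (F u) (4 / (norm (u - ub) / c))"
      using that far \<open>c > 0\<close>
      by (intro metrically_regular_around_plus_delta_inequality_system[OF fin C assms(3,4)]) auto
    then show ?thesis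
      by simp
  qed
  ultimately show ?thesis
    unfolding metrically_2_regular_def using \<open>w \<noteq> 0\<close> \<open>c > 0\<close> \<open>\<epsilon> > 0\<close> \<open>\<delta> > 0\<close>
    by (intro conjI exI[of _ "4 * c"] exI[of _ \<epsilon>] exI[of _ \<delta>] exI[of _ \<rho>])
      (auto simp: plus_delta_eq split: if_splits)
qed

end
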